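(* Let $\mathcal{E}$ and $\mathcal{F}$ be fusion systems over finite $p$-groups $R$ and $S$, at least one of them saturated, and let $\phi:S\to R$ be a group isomorphism inducing an isomorphism of fusion systems $\mathcal{F}\to\mathcal{E}$. If $Q$ is a fully $\mathcal{F}$-normalized subgroup of $S$ and $P=\phi(Q)$, then $\Delta(P,\phi,Q)=\{(\phi(y),y):y\in Q\}$ is a fully $\mathcal{E}\times\mathcal{F}$-normalized subgroup of $R\times S$.
   Context: $\phi$ induces an isomorphism $\mathcal{F}\to\mathcal{E}$ if $\mathrm{Hom}_\mathcal{E}(\phi(P_1),\phi(P_2))=\phi\circ\mathrm{Hom}_\mathcal{F}(P_1,P_2)\circ\phi^{-1}$ for all $P_1,P_2\le S$. $\mathcal{E}\times\mathcal{F}$ is the fusion system over $R\times S$ in which, for $U,V\le R\times S$, $\mathrm{Hom}_{\mathcal{E}\times\mathcal{F}}(U,V)$ consists of the homomorphisms $U\to V$ of the form $(\psi_1,\psi_2)|_U$ with $\psi_1\in\mathrm{Hom}_\mathcal{E}(p_1(U),p_1(V))$, $\psi_2\in\mathrm{Hom}_\mathcal{F}(p_2(U),p_2(V))$ ($p_i$ the projections). A subgroup is fully normalized in a fusion system if its normalizer has maximal order among all subgroups isomorphic to it in the fusion system. *)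

theory Defs
  imports "HOL-Algebra.Algebra" "HOL-Library.FuncSet"
begin

text \<open>Fusion systems over a group G (with carrier type 'a) are represented by their
  morphism sets: F P Q is the set Hom_F(P,Q) for subgroups P, Q of G.
  Morphisms are functions restricted to their domain (extensional, value
  undefined outside the domain), so that equality of morphisms is equality
  of functions on the domain.\<close>

type_synonym 'a fusion = "'a set \<Rightarrow> 'a set \<Rightarrow> ('a \<Rightarrow> 'a) set"

definition p_group :: "nat \<Rightarrow> ('a, 'm) monoid_scheme \<Rightarrow> bool" where
  "p_group p G \<longleftrightarrow> group G \<and> Factorial_Ring.prime p \<and> finite (carrier G)
     \<and> (\<exists>n. card (carrier G) = p ^ n)"

definition conj_map :: "('a, 'm) monoid_scheme \<Rightarrow> 'a \<Rightarrow> 'a set \<Rightarrow> ('a \<Rightarrow> 'a)" where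
  "conj_map G g P = (\<lambda>x\<in>P. g \<otimes>\<^bsub>G\<^esub> x \<otimes>\<^bsub>G\<^esub> inv\<^bsub>G\<^esub> g)"

definition Hom_grp :: "('a, 'm) monoid_scheme \<Rightarrow> 'a set \<Rightarrow> 'a set \<Rightarrow> ('a \<Rightarrow> 'a) set" where
  "Hom_grp G P Q = {conj_map G g P | g. g \<in> carrier G \<and>
      (\<lambda>x. g \<otimes>\<^bsub>G\<^esub> x \<otimes>\<^bsub>G\<^esub> inv\<^bsub>G\<^esub> g) ` P \<subseteq> Q}"

definition Inj_hom :: "('a, 'm) monoid_scheme \<Rightarrow> 'a set \<Rightarrow> 'a set \<Rightarrow> ('a \<Rightarrow> 'a) set" where
  "Inj_hom G P Q = {f. f \<in> extensional P \<and>
      f \<in> hom (G\<lparr>carrier := P\<rparr>) (G\<lparr>carrier := Q\<rparr>) \<and> inj_on f P}"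

definition fusion_system :: "nat \<Rightarrow> ('a, 'm) monoid_scheme \<Rightarrow> 'a fusion \<Rightarrow> bool" where
  "fusion_system p G F \<longleftrightarrow> p_group p G \<and>
    (\<forall>P Q. subgroup P G \<and> subgroup Q G \<longrightarrow>
        Hom_grp G P Q \<subseteq> F P Q \<and> F P Q \<subseteq> Inj_hom G P Q) \<and>
    (\<forall>P Q T f g. subgroup P G \<and> subgroup Q G \<and> subgroup T G \<and> f \<in> F P Q \<and> g \<in> F Q T
        \<longrightarrow> restrict (g \<circ> f) P \<in> F P T) \<and>
    (\<forall>P Q f. subgroup P G \<and> subgroup Q G \<and> f \<in> F P Q \<longrightarrow>
        f \<in> F P (f ` P) \<and> restrict (inv_into P f) (f ` P) \<in> F (f ` P) P)"

definition normalizer_in :: "('a, 'm) monoid_scheme \<Rightarrow> 'a set \<Rightarrow> 'a set" where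
  "normalizer_in G P = {g \<in> carrier G. (\<lambda>x. g \<otimes>\<^bsub>G\<^esub> x \<otimes>\<^bsub>G\<^esub> inv\<^bsub>G\<^esub> g) ` P = P}"

definition centralizer_in :: "('a, 'm) monoid_scheme \<Rightarrow> 'a set \<Rightarrow> 'a set" where
  "centralizer_in G P = {g \<in> carrier G. \<forall>x\<in>P. g \<otimes>\<^bsub>G\<^esub> x = x \<otimes>\<^bsub>G\<^esub> g}"

definition F_conj :: "'a fusion \<Rightarrow> 'a set \<Rightarrow> 'a set \<Rightarrow> bool" where
  "F_conj F P P' \<longleftrightarrow> (\<exists>f\<in>F P P'. f ` P = P')"

definition fully_normalized :: "('a, 'm) monoid_scheme \<Rightarrow> 'a fusion \<Rightarrow> 'a set \<Rightarrow> bool" where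
  "fully_normalized G F P \<longleftrightarrow> subgroup P G \<and>
     (\<forall>P'. subgroup P' G \<and> F_conj F P P' \<longrightarrow>
        card (normalizer_in G P') \<le> card (normalizer_in G P))"

definition fully_centralized :: "('a, 'm) monoid_scheme \<Rightarrow> 'a fusion \<Rightarrow> 'a set \<Rightarrow> bool" where
  "fully_centralized G F P \<longleftrightarrow> subgroup P G \<and>
     (\<forall>P'. subgroup P' G \<and> F_conj F P P' \<longrightarrow>
        card (centralizer_in G P') \<le> card (centralizer_in G P))"

definition Aut_grp :: "('a, 'm) monoid_scheme \<Rightarrow> 'a set \<Rightarrow> ('a \<Rightarrow> 'a) set" where
  "Aut_grp G P = {conj_map G g P | g. g \<in> normalizer_in G P}"

definition N_phi :: "('a, 'm) monoid_scheme \<Rightarrow> 'a set \<Rightarrow> ('a \<Rightarrow> 'a) \<Rightarrow> 'a set" where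
  "N_phi G P f = {g \<in> normalizer_in G P. \<exists>h \<in> normalizer_in G (f ` P).
      \<forall>x\<in>P. f (g \<otimes>\<^bsub>G\<^esub> x \<otimes>\<^bsub>G\<^esub> inv\<^bsub>G\<^esub> g) = h \<otimes>\<^bsub>G\<^esub> f x \<otimes>\<^bsub>G\<^esub> inv\<^bsub>G\<^esub> h}"

text \<open>Saturation (Broto-Levi-Oliver):
  (I) every fully normalized P is fully centralized and Aut_S(P) is a Sylow p-subgroup
      of Aut_F(P);
  (II) every phi \<in> Hom_F(P,S) with phi(P) fully centralized extends to some
      morphism in Hom_F(N_phi,S).\<close>
definition saturated :: "nat \<Rightarrow> ('a, 'm) monoid_scheme \<Rightarrow> 'a fusion \<Rightarrow> bool" where
  "saturated p G F \<longleftrightarrow> fusion_system p G F \<and>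
    (\<forall>P. fully_normalized G F P \<longrightarrow>
        fully_centralized G F P \<and>
        (\<exists>k. card (Aut_grp G P) = p ^ k) \<and>
        (\<exists>m. card (F P P) = card (Aut_grp G P) * m \<and> \<not> p dvd m)) \<and>
    (\<forall>P f. subgroup P G \<and> f \<in> F P (carrier G) \<and> fully_centralized G F (f ` P) \<longrightarrow>
        (\<exists>g \<in> F (N_phi G P f) (carrier G). \<forall>x\<in>P. g x = f x))"

definition prod_fusion :: "'a fusion \<Rightarrow> 'b fusion \<Rightarrow> ('a \<times> 'b) fusion" where
  "prod_fusion E F U V = {h. \<exists>\<psi>1 \<psi>2. \<psi>1 \<in> E (fst ` U) (fst ` V) \<and> \<psi>2 \<in> F (snd ` U) (snd ` V)
      \<and> h = (\<lambda>u\<in>U. (\<psi>1 (fst u), \<psi>2 (snd u))) \<and> h ` U \<subseteq> V}"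

definition induces_fusion_iso ::
  "('b, 'n) monoid_scheme \<Rightarrow> ('b \<Rightarrow> 'a) \<Rightarrow> 'b fusion \<Rightarrow> 'a fusion \<Rightarrow> bool" where
  "induces_fusion_iso S \<phi> F E \<longleftrightarrow>
    (\<forall>P1 P2. subgroup P1 S \<and> subgroup P2 S \<longrightarrow>
       E (\<phi> ` P1) (\<phi> ` P2) =
         (\<lambda>\<alpha>. \<lambda>x\<in>\<phi> ` P1. \<phi> (\<alpha> (inv_into (carrier S) \<phi> x))) ` F P1 P2)"

definition Delta :: "('b \<Rightarrow> 'a) \<Rightarrow> 'b set \<Rightarrow> ('a \<times> 'b) set" where
  "Delta \<phi> Q = {(\<phi> y, y) | y. y \<in> Q}"

end

(* Write P = phi ` Q. The normalizer of Delta phi Q in R x S contains the pairs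
   (c * phi s, s) with c in C_R(P) and s in N_S(Q), so it has at least
   |C_R(P)| * |N_S(Q)| elements. An (E x F)-conjugate of Delta phi Q is the graph of an
   injective map over its second projection B, with first projection A; in an element
   (r, s) of its normalizer, s normalizes B and r is determined by s up to C_R(A), so
   that normalizer has at most |C_R(A)| * |N_S(B)| elements. Now A is E-conjugate to P
   and B is F-conjugate to Q, so |N_S(B)| <= |N_S(Q)| because Q is fully normalized, and
   |C_R(A)| <= |C_R(P)| because P is fully centralized: by saturation of E (P is fully
   normalized, being the image of Q) or by saturation of F transported along phi. *)

theory Submission
  imports Defs
begin

lemma (in group) conj_eq_imp_commute:
  assumes "a \<in> carrier G" "r \<in> carrier G" "g \<in> carrier G"
    and "r \<otimes> a \<otimes> inv r = g \<otimes> a \<otimes> inv g"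
  shows "(inv g \<otimes> r) \<otimes> a = a \<otimes> (inv g \<otimes> r)"
proof -
  have "r \<otimes> a = g \<otimes> a \<otimes> inv g \<otimes> r"
    using assms by (simp add: inv_solve_right')
  then show ?thesis
    using assms(1-3) by (simp add: m_assoc inv_solve_left')
qed

lemma (in group) conj_mult:
  assumes "a \<in> carrier G" "c \<in> carrier G" "d \<in> carrier G"
  shows "(c \<otimes> d) \<otimes> a \<otimes> inv (c \<otimes> d) = c \<otimes> (d \<otimes> a \<otimes> inv d) \<otimes> inv c"
  using assms by (simp add: m_assoc inv_mult_group)

lemma subgroup_fst_image:
  assumes "group G" "group H" "subgroup P (G \<times>\<times> H)"
  shows "subgroup (fst ` P) G"
proof -
  have "group_hom (G \<times>\<times> H) G fst"
    using assms by (auto simp: group_hom_def group_hom_axioms_def hom_def DirProd_group)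
  then show ?thesis
    using assms(3) by (rule group_hom.subgroup_img_is_subgroup)
qed

lemma subgroup_snd_image:
  assumes "group G" "group H" "subgroup P (G \<times>\<times> H)"
  shows "subgroup (snd ` P) H"
proof -
  have "group_hom (G \<times>\<times> H) H snd"
    using assms by (auto simp: group_hom_def group_hom_axioms_def hom_def DirProd_group)
  then show ?thesis
    using assms(3) by (rule group_hom.subgroup_img_is_subgroup)
qed

lemma normalizer_in_DirProd_iff:
  assumes "group G" "group H" "P \<subseteq> carrier G \<times> carrier H"
  shows "(g, h) \<in> normalizer_in (G \<times>\<times> H) P \<longleftrightarrow> g \<in> carrier G \<and> h \<in> carrier H \<and>
    (\<lambda>(a, b). (g \<otimes>\<^bsub>G\<^esub> a \<otimes>\<^bsub>G\<^esub> inv\<^bsub>G\<^esub> g, h \<otimes>\<^bsub>H\<^esub> b \<otimes>\<^bsub>H\<^esub> inv\<^bsub>H\<^esub> h)) ` P = P"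
proof -
  have "(\<lambda>x. (g, h) \<otimes>\<^bsub>G \<times>\<times> H\<^esub> x \<otimes>\<^bsub>G \<times>\<times> H\<^esub> inv\<^bsub>G \<times>\<times> H\<^esub> (g, h)) ` P
      = (\<lambda>(a, b). (g \<otimes>\<^bsub>G\<^esub> a \<otimes>\<^bsub>G\<^esub> inv\<^bsub>G\<^esub> g, h \<otimes>\<^bsub>H\<^esub> b \<otimes>\<^bsub>H\<^esub> inv\<^bsub>H\<^esub> h)) ` P"
    if "g \<in> carrier G" "h \<in> carrier H"
    using that assms by (intro image_cong) auto
  then show ?thesis
    by (simp add: normalizer_in_def cong: conj_cong del: inv_DirProd)
qed

lemma normalizer_in_DirProd_snd:
  assumes "group G" "group H" "P \<subseteq> carrier G \<times> carrier H"
    and "(r, s) \<in> normalizer_in (G \<times>\<times> H) P"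
  shows "s \<in> normalizer_in H (snd ` P)"
proof -
  have s: "s \<in> carrier H"
    and rs: "(\<lambda>(a, b). (r \<otimes>\<^bsub>G\<^esub> a \<otimes>\<^bsub>G\<^esub> inv\<^bsub>G\<^esub> r, s \<otimes>\<^bsub>H\<^esub> b \<otimes>\<^bsub>H\<^esub> inv\<^bsub>H\<^esub> s)) ` P = P"
    using assms by (simp_all add: normalizer_in_DirProd_iff)
  have "(\<lambda>b. s \<otimes>\<^bsub>H\<^esub> b \<otimes>\<^bsub>H\<^esub> inv\<^bsub>H\<^esub> s) ` snd ` P
      = snd ` (\<lambda>(a, b). (r \<otimes>\<^bsub>G\<^esub> a \<otimes>\<^bsub>G\<^esub> inv\<^bsub>G\<^esub> r, s \<otimes>\<^bsub>H\<^esub> b \<otimes>\<^bsub>H\<^esub> inv\<^bsub>H\<^esub> s)) ` P"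
    by (simp add: image_image case_prod_beta)
  then show ?thesis
    using s rs by (simp add: normalizer_in_def)
qed

lemma inv_mult_in_centralizer_in_fst_image:
  assumes G: "group G" and H: "group H" and Pc: "P \<subseteq> carrier G \<times> carrier H"
    and graph: "inj_on snd P"
    and "(r, s) \<in> normalizer_in (G \<times>\<times> H) P" "(g, s) \<in> normalizer_in (G \<times>\<times> H) P"
  shows "inv\<^bsub>G\<^esub> g \<otimes>\<^bsub>G\<^esub> r \<in> centralizer_in G (fst ` P)"
proof -
  interpret G: group G by (fact G)
  have r: "r \<in> carrier G" and g: "g \<in> carrier G"
    and rs: "(\<lambda>(a, b). (r \<otimes>\<^bsub>G\<^esub> a \<otimes>\<^bsub>G\<^esub> inv\<^bsub>G\<^esub> r, s \<otimes>\<^bsub>H\<^esub> b \<otimes>\<^bsub>H\<^esub> inv\<^bsub>H\<^esub> s)) ` P = P"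
    and gs: "(\<lambda>(a, b). (g \<otimes>\<^bsub>G\<^esub> a \<otimes>\<^bsub>G\<^esub> inv\<^bsub>G\<^esub> g, s \<otimes>\<^bsub>H\<^esub> b \<otimes>\<^bsub>H\<^esub> inv\<^bsub>H\<^esub> s)) ` P = P"
    using assms by (simp_all add: normalizer_in_DirProd_iff)
  have "inv\<^bsub>G\<^esub> g \<otimes>\<^bsub>G\<^esub> r \<otimes>\<^bsub>G\<^esub> a = a \<otimes>\<^bsub>G\<^esub> (inv\<^bsub>G\<^esub> g \<otimes>\<^bsub>G\<^esub> r)"
    if ab: "(a, b) \<in> P" for a b
  proof -
    \<comment> \<open>\<open>(r, s)\<close> and \<open>(g, s)\<close> conjugate \<open>(a, b)\<close> to points of the graph \<open>P\<close> with the
      same second coordinate, hence to the same point.\<close>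
    have "(r \<otimes>\<^bsub>G\<^esub> a \<otimes>\<^bsub>G\<^esub> inv\<^bsub>G\<^esub> r, s \<otimes>\<^bsub>H\<^esub> b \<otimes>\<^bsub>H\<^esub> inv\<^bsub>H\<^esub> s) \<in> P"
      using rs ab by (metis (lifting) case_prod_conv image_eqI)
    moreover have "(g \<otimes>\<^bsub>G\<^esub> a \<otimes>\<^bsub>G\<^esub> inv\<^bsub>G\<^esub> g, s \<otimes>\<^bsub>H\<^esub> b \<otimes>\<^bsub>H\<^esub> inv\<^bsub>H\<^esub> s) \<in> P"
      using gs ab by (metis (lifting) case_prod_conv image_eqI)
    ultimately have "r \<otimes>\<^bsub>G\<^esub> a \<otimes>\<^bsub>G\<^esub> inv\<^bsub>G\<^esub> r = g \<otimes>\<^bsub>G\<^esub> a \<otimes>\<^bsub>G\<^esub> inv\<^bsub>G\<^esub> g"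
      using inj_onD[OF graph] by fastforce
    moreover have "a \<in> carrier G"
      using ab Pc by blast
    ultimately show ?thesis
      using G.conj_eq_imp_commute r g by blast
  qed
  then show ?thesis
    using r g by (auto simp: centralizer_in_def)
qed

lemma card_normalizer_in_graph_le:
  assumes G: "group G" and H: "group H"
    and fin: "finite (carrier G)" "finite (carrier H)"
    and P: "subgroup P (G \<times>\<times> H)" and graph: "inj_on snd P"
  shows "card (normalizer_in (G \<times>\<times> H) P)
    \<le> card (centralizer_in G (fst ` P)) * card (normalizer_in H (snd ` P))"
proof -
  interpret G: group G by (fact G)
  let ?N = "normalizer_in (G \<times>\<times> H) P"
  let ?C = "centralizer_in G (fst ` P)" and ?M = "normalizer_in H (snd ` P)"
  have Pc: "P \<subseteq> carrier G \<times> carrier H"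
    using subgroup.subset[OF P] by simp
  define rep where "rep s = (SOME r. (r, s) \<in> ?N)" for s
  have rep: "(rep s, s) \<in> ?N" if "(r, s) \<in> ?N" for r s
    unfolding rep_def using that by (rule someI)
  define m where "m = (\<lambda>(r, s). (inv\<^bsub>G\<^esub> rep s \<otimes>\<^bsub>G\<^esub> r, s))"
  have "inj_on m ?N"
  proof (rule inj_onI, clarify)
    fix r s r' s'
    assume rs: "(r, s) \<in> ?N" "(r', s') \<in> ?N" and "m (r, s) = m (r', s')"
    then have "s' = s" and "inv\<^bsub>G\<^esub> rep s \<otimes>\<^bsub>G\<^esub> r = inv\<^bsub>G\<^esub> rep s \<otimes>\<^bsub>G\<^esub> r'"
      by (auto simp: m_def)
    moreover have "rep s \<in> carrier G" "r \<in> carrier G" "r' \<in> carrier G"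
      using rep[OF rs(1)] rs by (simp_all add: normalizer_in_DirProd_iff[OF G H Pc])
    ultimately show "r = r' \<and> s = s'"
      by simp
  qed
  moreover have "m ` ?N \<subseteq> ?C \<times> ?M"
    using inv_mult_in_centralizer_in_fst_image[OF G H Pc graph] rep
      normalizer_in_DirProd_snd[OF G H Pc]
    by (force simp: m_def)
  moreover have "finite (?C \<times> ?M)"
    using fin by (auto simp: centralizer_in_def normalizer_in_def)
  ultimately have "card ?N \<le> card (?C \<times> ?M)"
    by (rule card_inj_on_le)
  then show ?thesis
    by (simp add: card_cartesian_product)
qed

lemma Delta_eq_image: "Delta \<phi> Q = (\<lambda>y. (\<phi> y, y)) ` Q"
  by (auto simp: Delta_def)

lemma (in group_hom) subgroup_Delta:
  assumes "subgroup Q G"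
  shows "subgroup (Delta h Q) (H \<times>\<times> G)"
proof -
  have "group_hom G (H \<times>\<times> G) (\<lambda>y. (h y, y))"
    by (auto simp: group_hom_def group_hom_axioms_def hom_def DirProd_group
        H.group_axioms G.group_axioms)
  then show ?thesis
    unfolding Delta_eq_image using assms by (rule group_hom.subgroup_img_is_subgroup)
qed

lemma (in group_hom) pair_in_normalizer_in_Delta:
  assumes Q: "subgroup Q G"
    and c: "c \<in> centralizer_in H (h ` Q)" and s: "s \<in> normalizer_in G Q"
  shows "(c \<otimes>\<^bsub>H\<^esub> h s, s) \<in> normalizer_in (H \<times>\<times> G) (Delta h Q)"
proof -
  have Qc: "Q \<subseteq> carrier G"
    using subgroup.subset[OF Q] .
  have Delta_c: "Delta h Q \<subseteq> carrier H \<times> carrier G"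
    using Qc by (auto simp: Delta_def)
  have cc: "c \<in> carrier H" and sc: "s \<in> carrier G"
    and sQ: "(\<lambda>y. s \<otimes> y \<otimes> inv s) ` Q = Q"
    using c s by (auto simp: centralizer_in_def normalizer_in_def)
  \<comment> \<open>\<open>(c \<otimes> h s, s)\<close> acts on \<open>Delta h Q\<close> like \<open>(h s, s)\<close>, as \<open>c\<close> centralizes \<open>h ` Q\<close>.\<close>
  have "(c \<otimes>\<^bsub>H\<^esub> h s) \<otimes>\<^bsub>H\<^esub> h y \<otimes>\<^bsub>H\<^esub> inv\<^bsub>H\<^esub> (c \<otimes>\<^bsub>H\<^esub> h s) = h (s \<otimes> y \<otimes> inv s)"
    if y: "y \<in> Q" for y
  proof -
    have yc: "y \<in> carrier G" and conj_y: "s \<otimes> y \<otimes> inv s \<in> Q"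
      using y Qc sQ by auto
    have "(c \<otimes>\<^bsub>H\<^esub> h s) \<otimes>\<^bsub>H\<^esub> h y \<otimes>\<^bsub>H\<^esub> inv\<^bsub>H\<^esub> (c \<otimes>\<^bsub>H\<^esub> h s)
        = c \<otimes>\<^bsub>H\<^esub> h (s \<otimes> y \<otimes> inv s) \<otimes>\<^bsub>H\<^esub> inv\<^bsub>H\<^esub> c"
      using cc sc yc by (simp add: H.conj_mult)
    also have "\<dots> = h (s \<otimes> y \<otimes> inv s) \<otimes>\<^bsub>H\<^esub> c \<otimes>\<^bsub>H\<^esub> inv\<^bsub>H\<^esub> c"
      using c conj_y by (auto simp: centralizer_in_def)
    also have "\<dots> = h (s \<otimes> y \<otimes> inv s)"
      using cc sc yc by (simp add: H.m_assoc)
    finally show ?thesis .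
  qed
  then have "(\<lambda>(a, b). ((c \<otimes>\<^bsub>H\<^esub> h s) \<otimes>\<^bsub>H\<^esub> a \<otimes>\<^bsub>H\<^esub> inv\<^bsub>H\<^esub> (c \<otimes>\<^bsub>H\<^esub> h s), s \<otimes> b \<otimes> inv s))
        ` Delta h Q = Delta h ((\<lambda>y. s \<otimes> y \<otimes> inv s) ` Q)"
    unfolding Delta_eq_image image_image by (intro image_cong) auto
  then show ?thesis
    using cc sc sQ
    by (simp add: normalizer_in_DirProd_iff[OF H.group_axioms G.group_axioms Delta_c])
qed

lemma (in group_hom) card_normalizer_in_Delta_ge:
  assumes Q: "subgroup Q G" and fin: "finite (carrier G)" "finite (carrier H)"
  shows "card (centralizer_in H (h ` Q)) * card (normalizer_in G Q)
    \<le> card (normalizer_in (H \<times>\<times> G) (Delta h Q))"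
proof -
  let ?C = "centralizer_in H (h ` Q)" and ?M = "normalizer_in G Q"
  define m where "m = (\<lambda>(c, s). (c \<otimes>\<^bsub>H\<^esub> h s, s))"
  have "inj_on m (?C \<times> ?M)"
    by (rule inj_onI) (auto simp: m_def centralizer_in_def normalizer_in_def)
  moreover have "m ` (?C \<times> ?M) \<subseteq> normalizer_in (H \<times>\<times> G) (Delta h Q)"
    using pair_in_normalizer_in_Delta[OF Q] by (auto simp: m_def)
  moreover have "finite (normalizer_in (H \<times>\<times> G) (Delta h Q))"
    using fin by (auto simp: normalizer_in_def)
  ultimately have "card (?C \<times> ?M) \<le> card (normalizer_in (H \<times>\<times> G) (Delta h Q))"
    by (rule card_inj_on_le)
  then show ?thesis
    by (simp add: card_cartesian_product)
qed

lemma saturated_fully_centralized: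
  "saturated p G F \<Longrightarrow> fully_normalized G F P \<Longrightarrow> fully_centralized G F P"
  by (simp add: saturated_def)

lemma fusion_system_Inj_hom:
  "fusion_system p G F \<Longrightarrow> subgroup P G \<Longrightarrow> subgroup Q G \<Longrightarrow> F P Q \<subseteq> Inj_hom G P Q"
  by (simp add: fusion_system_def)

lemma (in group_hom) F_conj_prod_fusion_Delta:
  assumes F: "fusion_system p G F" and Q: "subgroup Q G" and P: "subgroup P (H \<times>\<times> G)"
    and conj: "F_conj (prod_fusion E F) (Delta h Q) P"
  shows "F_conj E (h ` Q) (fst ` P)" and "F_conj F Q (snd ` P)" and "inj_on snd P"
proof -
  obtain k where k: "k \<in> prod_fusion E F (Delta h Q) P" "k ` Delta h Q = P"
    using conj by (auto simp: F_conj_def)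
  have "fst ` Delta h Q = h ` Q" "snd ` Delta h Q = Q"
    by (force simp: Delta_def)+
  then obtain \<psi>1 \<psi>2 where \<psi>: "\<psi>1 \<in> E (h ` Q) (fst ` P)" "\<psi>2 \<in> F Q (snd ` P)"
    and k_eq: "k = (\<lambda>u\<in>Delta h Q. (\<psi>1 (fst u), \<psi>2 (snd u)))"
    using k(1) by (auto simp: prod_fusion_def)
  have P_eq: "P = (\<lambda>y. (\<psi>1 (h y), \<psi>2 y)) ` Q"
    using k(2) by (auto simp: k_eq Delta_def image_iff)
  show "F_conj E (h ` Q) (fst ` P)"
    using \<psi>(1) by (auto simp: F_conj_def P_eq image_image)
  show "F_conj F Q (snd ` P)"
    using \<psi>(2) by (auto simp: F_conj_def P_eq image_image)
  have "subgroup (snd ` P) G"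
    using subgroup_snd_image[OF H.group_axioms G.group_axioms P] .
  then have "inj_on \<psi>2 Q"
    using fusion_system_Inj_hom[OF F Q] \<psi>(2) by (auto simp: Inj_hom_def)
  then show "inj_on snd P"
    unfolding P_eq by (intro inj_on_imageI) (simp add: comp_def)
qed

lemma (in group_hom) image_conj:
  assumes "g \<in> carrier G" "Z \<subseteq> carrier G"
  shows "(\<lambda>x. h g \<otimes>\<^bsub>H\<^esub> x \<otimes>\<^bsub>H\<^esub> inv\<^bsub>H\<^esub> h g) ` h ` Z = h ` (\<lambda>x. g \<otimes> x \<otimes> inv g) ` Z"
  unfolding image_image using assms by (intro image_cong) auto

locale group_iso = S: group S + R: group R
  for S :: "('b, 'n) monoid_scheme" and R :: "('a, 'm) monoid_scheme" +
  fixes \<phi> :: "'b \<Rightarrow> 'a"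
  assumes iso: "\<phi> \<in> iso S R"

sublocale group_iso \<subseteq> group_hom S R \<phi>
  using iso by unfold_locales (simp add: iso_def)

context group_iso
begin

lemma inj_on_carrier: "inj_on \<phi> (carrier S)"
  using iso by (simp add: iso_def bij_betw_def)

lemma image_carrier: "\<phi> ` carrier S = carrier R"
  using iso by (simp add: iso_def bij_betw_def)

lemma eq_image_if_mem_iff:
  assumes "A \<subseteq> carrier R" "B \<subseteq> carrier S"
    and "\<And>g. g \<in> carrier S \<Longrightarrow> \<phi> g \<in> A \<longleftrightarrow> g \<in> B"
  shows "A = \<phi> ` B"
proof
  show "A \<subseteq> \<phi> ` B"
  proof
    fix a assume "a \<in> A"
    then obtain g where "g \<in> carrier S" "a = \<phi> g"
      using assms(1) image_carrier by blast
    with \<open>a \<in> A\<close> assms(3) show "a \<in> \<phi> ` B"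
      by blast
  qed
  show "\<phi> ` B \<subseteq> A"
    using assms(2,3) by blast
qed

lemma normalizer_in_image:
  assumes Z: "Z \<subseteq> carrier S"
  shows "normalizer_in R (\<phi> ` Z) = \<phi> ` normalizer_in S Z"
proof (rule eq_image_if_mem_iff)
  fix g assume g: "g \<in> carrier S"
  have "(\<lambda>x. g \<otimes>\<^bsub>S\<^esub> x \<otimes>\<^bsub>S\<^esub> inv\<^bsub>S\<^esub> g) ` Z \<subseteq> carrier S"
    using g Z by auto
  then show "\<phi> g \<in> normalizer_in R (\<phi> ` Z) \<longleftrightarrow> g \<in> normalizer_in S Z"
    using g Z by (simp add: normalizer_in_def image_conj inj_on_image_eq_iff[OF inj_on_carrier])
qed (auto simp: normalizer_in_def)

lemma centralizer_in_image:
  assumes Z: "Z \<subseteq> carrier S"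
  shows "centralizer_in R (\<phi> ` Z) = \<phi> ` centralizer_in S Z"
proof (rule eq_image_if_mem_iff)
  fix g assume g: "g \<in> carrier S"
  have "\<phi> g \<otimes>\<^bsub>R\<^esub> \<phi> x = \<phi> x \<otimes>\<^bsub>R\<^esub> \<phi> g \<longleftrightarrow> g \<otimes>\<^bsub>S\<^esub> x = x \<otimes>\<^bsub>S\<^esub> g" if "x \<in> Z" for x
  proof -
    have x: "x \<in> carrier S"
      using that Z by blast
    then have "\<phi> g \<otimes>\<^bsub>R\<^esub> \<phi> x = \<phi> x \<otimes>\<^bsub>R\<^esub> \<phi> g \<longleftrightarrow> \<phi> (g \<otimes>\<^bsub>S\<^esub> x) = \<phi> (x \<otimes>\<^bsub>S\<^esub> g)"
      using g by simp
    also have "\<dots> \<longleftrightarrow> g \<otimes>\<^bsub>S\<^esub> x = x \<otimes>\<^bsub>S\<^esub> g"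
      using g x by (intro inj_on_eq_iff[OF inj_on_carrier]) auto
    finally show ?thesis .
  qed
  then show "\<phi> g \<in> centralizer_in R (\<phi> ` Z) \<longleftrightarrow> g \<in> centralizer_in S Z"
    using g by (simp add: centralizer_in_def)
qed (auto simp: centralizer_in_def)

lemma card_normalizer_in_image:
  assumes "Z \<subseteq> carrier S"
  shows "card (normalizer_in R (\<phi> ` Z)) = card (normalizer_in S Z)"
proof -
  have "inj_on \<phi> (normalizer_in S Z)"
    by (rule inj_on_subset[OF inj_on_carrier]) (auto simp: normalizer_in_def)
  then show ?thesis
    by (simp add: normalizer_in_image[OF assms] card_image)
qed

lemma card_centralizer_in_image:
  assumes "Z \<subseteq> carrier S"
  shows "card (centralizer_in R (\<phi> ` Z)) = card (centralizer_in S Z)"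
proof -
  have "inj_on \<phi> (centralizer_in S Z)"
    by (rule inj_on_subset[OF inj_on_carrier]) (auto simp: centralizer_in_def)
  then show ?thesis
    by (simp add: centralizer_in_image[OF assms] card_image)
qed

lemma subgroup_imageE:
  assumes "subgroup A R"
  obtains W where "subgroup W S" "A = \<phi> ` W"
proof
  have "group_hom R S (inv_into (carrier S) \<phi>)"
    using S.iso_set_sym[OF iso] by unfold_locales (simp add: iso_def)
  then show "subgroup (inv_into (carrier S) \<phi> ` A) S"
    using assms by (rule group_hom.subgroup_img_is_subgroup)
  show "A = \<phi> ` inv_into (carrier S) \<phi> ` A"
    using image_inv_into_cancel[OF image_carrier subgroup.subset[OF assms]] by simp
qed

end

locale fusion_iso = group_iso S R \<phi>
  for S :: "('b, 'n) monoid_scheme" and R :: "('a, 'm) monoid_scheme" and \<phi> +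
  fixes p :: nat and F :: "'b fusion" and E :: "'a fusion"
  assumes fusion_F: "fusion_system p S F"
    and induces: "induces_fusion_iso S \<phi> F E"
begin

lemma F_conj_imageE:
  assumes Q: "subgroup Q S" and A: "subgroup A R" and conj: "F_conj E (\<phi> ` Q) A"
  obtains W where "subgroup W S" "A = \<phi> ` W" "F_conj F Q W"
proof -
  obtain W where W: "subgroup W S" and A_eq: "A = \<phi> ` W"
    using subgroup_imageE[OF A] .
  obtain f where f: "f \<in> E (\<phi> ` Q) (\<phi> ` W)" "f ` \<phi> ` Q = \<phi> ` W"
    using conj A_eq by (auto simp: F_conj_def)
  then obtain \<alpha> where \<alpha>: "\<alpha> \<in> F Q W" and f_eq: "f = (\<lambda>x\<in>\<phi> ` Q. \<phi> (\<alpha> (inv_into (carrier S) \<phi> x)))"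
    using induces Q W by (auto simp: induces_fusion_iso_def)
  have "\<alpha> ` Q \<subseteq> W"
    using fusion_system_Inj_hom[OF fusion_F Q W] \<alpha> by (auto simp: Inj_hom_def hom_def)
  moreover have "\<phi> ` \<alpha> ` Q = f ` \<phi> ` Q"
    unfolding image_image using subgroup.subset[OF Q]
    by (intro image_cong) (auto simp: f_eq inv_into_f_f[OF inj_on_carrier])
  then have "\<phi> ` \<alpha> ` Q = \<phi> ` W"
    using f(2) by simp
  ultimately have "\<alpha> ` Q = W"
    using subgroup.subset[OF W] inj_on_carrier by (simp add: inj_on_image_eq_iff)
  then have "F_conj F Q W"
    using \<alpha> by (auto simp: F_conj_def)
  with W A_eq show ?thesis
    by (rule that)
qed

lemma fully_normalized_image:
  assumes "fully_normalized S F Q"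
  shows "fully_normalized R E (\<phi> ` Q)"
  unfolding fully_normalized_def
proof (intro conjI allI impI)
  have Q: "subgroup Q S"
    using assms by (simp add: fully_normalized_def)
  then show "subgroup (\<phi> ` Q) R"
    by (rule subgroup_img_is_subgroup)
  fix A assume "subgroup A R \<and> F_conj E (\<phi> ` Q) A"
  then obtain W where W: "subgroup W S" "A = \<phi> ` W" "F_conj F Q W"
    using F_conj_imageE[OF Q] by blast
  then have "card (normalizer_in S W) \<le> card (normalizer_in S Q)"
    using assms by (simp add: fully_normalized_def)
  then show "card (normalizer_in R A) \<le> card (normalizer_in R (\<phi> ` Q))"
    using W subgroup.subset[OF W(1)] subgroup.subset[OF Q] by (simp add: card_normalizer_in_image)
qed

lemma fully_centralized_image:
  assumes "fully_centralized S F Q"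
  shows "fully_centralized R E (\<phi> ` Q)"
  unfolding fully_centralized_def
proof (intro conjI allI impI)
  have Q: "subgroup Q S"
    using assms by (simp add: fully_centralized_def)
  then show "subgroup (\<phi> ` Q) R"
    by (rule subgroup_img_is_subgroup)
  fix A assume "subgroup A R \<and> F_conj E (\<phi> ` Q) A"
  then obtain W where W: "subgroup W S" "A = \<phi> ` W" "F_conj F Q W"
    using F_conj_imageE[OF Q] by blast
  then have "card (centralizer_in S W) \<le> card (centralizer_in S Q)"
    using assms by (simp add: fully_centralized_def)
  then show "card (centralizer_in R A) \<le> card (centralizer_in R (\<phi> ` Q))"
    using W subgroup.subset[OF W(1)] subgroup.subset[OF Q] by (simp add: card_centralizer_in_image)
qed

lemma fully_centralized_image_if_saturated:
  assumes "saturated p R E \<or> saturated p S F" and "fully_normalized S F Q"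
  shows "fully_centralized R E (\<phi> ` Q)"
  using assms(1)
proof
  assume "saturated p R E"
  then show ?thesis
    using fully_normalized_image[OF assms(2)] by (rule saturated_fully_centralized)
next
  assume "saturated p S F"
  then show ?thesis
    using assms(2) by (intro fully_centralized_image saturated_fully_centralized)
qed

end

theorem lemma2p9:
  fixes p :: nat
    and R :: "('a, 'm) monoid_scheme" and S :: "('b, 'n) monoid_scheme"
    and E :: "'a fusion" and F :: "'b fusion"
    and \<phi> :: "'b \<Rightarrow> 'a" and Q :: "'b set"
  assumes "fusion_system p R E" and "fusion_system p S F"
    and "saturated p R E \<or> saturated p S F"
    and "\<phi> \<in> iso S R"
    and "induces_fusion_iso S \<phi> F E"
    and "fully_normalized S F Q"
  shows "fully_normalized (R \<times>\<times> S) (prod_fusion E F) (Delta \<phi> Q)"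
proof -
  have R: "group R" "finite (carrier R)" and S: "group S" "finite (carrier S)"
    using assms(1,2) by (auto simp: fusion_system_def p_group_def)
  interpret fusion_iso S R \<phi> p F E
    using R(1) S(1) assms(2,4,5)
    by (simp add: fusion_iso_def fusion_iso_axioms_def group_iso_def group_iso_axioms_def)
  have Q: "subgroup Q S"
    using assms(6) by (simp add: fully_normalized_def)
  have centralized: "fully_centralized R E (\<phi> ` Q)"
    using assms(3,6) by (rule fully_centralized_image_if_saturated)
  show ?thesis
    unfolding fully_normalized_def
  proof (intro conjI allI impI)
    show "subgroup (Delta \<phi> Q) (R \<times>\<times> S)"
      using Q by (rule subgroup_Delta)
    fix P assume "subgroup P (R \<times>\<times> S) \<and> F_conj (prod_fusion E F) (Delta \<phi> Q) P"
    then have P: "subgroup P (R \<times>\<times> S)" and conj: "F_conj (prod_fusion E F) (Delta \<phi> Q) P"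
      by auto
    note projections = F_conj_prod_fusion_Delta[OF assms(2) Q P conj]
    have "card (normalizer_in (R \<times>\<times> S) P)
        \<le> card (centralizer_in R (fst ` P)) * card (normalizer_in S (snd ` P))"
      using R S P projections(3) by (intro card_normalizer_in_graph_le)
    also have "\<dots> \<le> card (centralizer_in R (\<phi> ` Q)) * card (normalizer_in S Q)"
      using centralized assms(6) projections(1,2)
        subgroup_fst_image[OF R(1) S(1) P] subgroup_snd_image[OF R(1) S(1) P]
      by (intro mult_le_mono) (simp_all add: fully_centralized_def fully_normalized_def)
    also have "\<dots> \<le> card (normalizer_in (R \<times>\<times> S) (Delta \<phi> Q))"
      using Q S(2) R(2) by (rule card_normalizer_in_Delta_ge)
    finally show "card (normalizer_in (R \<times>\<times> S) P) \<le> card (normalizer_in (R \<times>\<times> S) (Delta \<phi> Q))" .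
  qed
qed

end
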